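(* Let $Y=\langle X,\beta^*\rangle=\sum_{j=1}^pX_j\beta^*_j$ where $X\in\mathbb{Z}^p$ and $\beta^*\in\mathbb{R}^p$ with $\beta^*_j\in\mathcal{S}=\{a_1,\dots,a_{\mathcal{R}}\}$ for every $j$, where $\mathcal{S}$ is rationally independent. Let $t=(t_0,t_1,\dots,t_{\mathcal{R}})$ be an integer relation for the vector $(Y,a_1,\dots,a_{\mathcal{R}})$. Then $t\in H$, where $$H=\{k(-1,\theta_1^*,\dots,\theta^*_{\mathcal{R}}):k\in\mathbb{Z}\setminus\{0\}\},\qquad \theta^*_i=\sum_{j:\beta^*_j=a_i}X_j.$$
   Context: A finite set of reals is rationally independent if the only rational linear combination of its elements equal to $0$ is the trivial one. An integer relation for $b\in\mathbb{R}^k$ is a nonzero $m\in\mathbb{Z}^k$ with $\langle b,m\rangle=0$. *)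

theory Defs
  imports Complex_Main
begin

definition rationally_independent :: "real set \<Rightarrow> bool" where
  "rationally_independent A \<longleftrightarrow> finite A \<and>
     (\<forall>c :: real \<Rightarrow> rat. (\<Sum>x\<in>A. real_of_rat (c x) * x) = 0 \<longrightarrow> (\<forall>x\<in>A. c x = 0))"

definition integer_relation :: "nat \<Rightarrow> (nat \<Rightarrow> real) \<Rightarrow> (nat \<Rightarrow> int) \<Rightarrow> bool" where
  "integer_relation n b m \<longleftrightarrow> (\<exists>i<n. m i \<noteq> 0) \<and> (\<Sum>i<n. b i * of_int (m i)) = 0"

end

theory Submission
  imports Defs
begin

(* Grouping the terms of Y by the value of the coefficients gives
   Y = theta_1 a_1 + ... + theta_R a_R with integers theta_i, so an integer relation t
   yields the vanishing integer combination sum_i (t_0 theta_i + t_i) a_i. Rational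
   independence forces t_i = -t_0 theta_i for all i, and t_0 is nonzero because t is. *)

lemma sum_mult_group_by_value:
  fixes x :: "'j \<Rightarrow> 'a::semiring_0"
  assumes "finite J" "finite I" "inj_on a I" "\<beta> ` J \<subseteq> a ` I"
  shows "(\<Sum>j\<in>J. x j * \<beta> j) = (\<Sum>i\<in>I. (\<Sum>j\<in>{j\<in>J. \<beta> j = a i}. x j) * a i)"
proof -
  have "(\<Sum>j\<in>J. x j * \<beta> j) = (\<Sum>y\<in>\<beta> ` J. \<Sum>j\<in>{j\<in>J. \<beta> j = y}. x j * \<beta> j)"
    using \<open>finite J\<close> by (rule sum.image_gen)
  also have "\<dots> = (\<Sum>y\<in>\<beta> ` J. (\<Sum>j\<in>{j\<in>J. \<beta> j = y}. x j) * y)"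
    by (simp add: sum_distrib_right)
  also have "\<dots> = (\<Sum>y\<in>a ` I. (\<Sum>j\<in>{j\<in>J. \<beta> j = y}. x j) * y)"
  proof (rule sum.mono_neutral_left)
    show "\<forall>y\<in>a ` I - \<beta> ` J. (\<Sum>j\<in>{j\<in>J. \<beta> j = y}. x j) * y = 0"
    proof
      fix y assume "y \<in> a ` I - \<beta> ` J"
      then have "{j\<in>J. \<beta> j = y} = {}" by force
      then show "(\<Sum>j\<in>{j\<in>J. \<beta> j = y}. x j) * y = 0"
        by (simp only: sum.empty mult_zero_left)
    qed
  qed (use assms in auto)
  also have "\<dots> = (\<Sum>i\<in>I. (\<Sum>j\<in>{j\<in>J. \<beta> j = a i}. x j) * a i)"
    using \<open>inj_on a I\<close> by (simp add: sum.reindex)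
  finally show ?thesis .
qed

lemma rationally_independent_coeffs_eq_0:
  assumes "rationally_independent (a ` I)" "inj_on a I"
    and "(\<Sum>i\<in>I. real_of_rat (c i) * a i) = 0" "i \<in> I"
  shows "c i = 0"
proof -
  define c' where "c' = c \<circ> the_inv_into I a"
  have c'_a: "c' (a k) = c k" if "k \<in> I" for k
    using the_inv_into_f_f[OF \<open>inj_on a I\<close> that] by (simp add: c'_def)
  have "(\<Sum>y\<in>a ` I. real_of_rat (c' y) * y) = (\<Sum>k\<in>I. real_of_rat (c k) * a k)"
    using \<open>inj_on a I\<close> by (simp add: sum.reindex c'_a)
  with assms(1,3) have "\<forall>y\<in>a ` I. c' y = 0"
    unfolding rationally_independent_def by simp
  with \<open>i \<in> I\<close> c'_a show ?thesis by auto
qed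

lemma sum_lessThan_add1_split_0:
  fixes n :: nat
  shows "(\<Sum>i<n + 1. f i) = f 0 + (\<Sum>i=1..n. f i)"
proof -
  have "{..<n + 1} = insert 0 {1..n}" by (auto simp: less_Suc_eq_le)
  then show ?thesis by simp
qed

lemma integer_relation_of_independent_combination:
  fixes \<theta> t :: "nat \<Rightarrow> int"
  assumes "inj_on a {1..R}" "rationally_independent (a ` {1..R})"
    and "integer_relation (R + 1)
           (\<lambda>i. if i = 0 then (\<Sum>k=1..R. of_int (\<theta> k) * a k) else a i) t"
  shows "t 0 \<noteq> 0" "\<forall>i\<in>{1..R}. t i = - t 0 * \<theta> i"
proof -
  let ?Y = "\<Sum>k=1..R. of_int (\<theta> k) * a k"
  have nonzero: "\<exists>i<R+1. t i \<noteq> 0"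
    and rel: "(\<Sum>i<R+1. (if i = 0 then ?Y else a i) * of_int (t i)) = 0"
    using assms(3) unfolding integer_relation_def by auto
  have "(\<Sum>i=1..R. (if i = 0 then ?Y else a i) * of_int (t i)) = (\<Sum>i=1..R. a i * of_int (t i))"
    by (rule sum.cong) auto
  then have "(\<Sum>i<R+1. (if i = 0 then ?Y else a i) * of_int (t i))
      = of_int (t 0) * ?Y + (\<Sum>i=1..R. a i * of_int (t i))"
    unfolding sum_lessThan_add1_split_0 by (simp add: mult.commute)
  also have "\<dots> = (\<Sum>i=1..R. of_int (t 0) * (of_int (\<theta> i) * a i) + a i * of_int (t i))"
    by (simp add: sum.distrib sum_distrib_left)
  also have "\<dots> = (\<Sum>i=1..R. real_of_rat (of_int (t 0 * \<theta> i + t i)) * a i)"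
    by (rule sum.cong) (simp_all add: of_rat_add of_rat_mult algebra_simps)
  finally have combination: "(\<Sum>i=1..R. real_of_rat (of_int (t 0 * \<theta> i + t i)) * a i) = 0"
    using rel by simp
  have "t 0 * \<theta> i + t i = 0" if "i \<in> {1..R}" for i
    using rationally_independent_coeffs_eq_0[OF assms(2,1) combination that]
    by (simp only: of_int_eq_0_iff)
  then show coeffs: "\<forall>i\<in>{1..R}. t i = - t 0 * \<theta> i"
    by (simp add: eq_neg_iff_add_eq_0 add.commute)
  show "t 0 \<noteq> 0"
  proof
    assume "t 0 = 0"
    with coeffs have "t i = 0" if "i < R + 1" for i
      using that by (cases "i = 0") auto
    with nonzero show False by blast
  qed
qed

theorem lemma3:
  fixes p R :: nat and X :: "nat \<Rightarrow> int" and \<beta> a :: "nat \<Rightarrow> real" and t :: "nat \<Rightarrow> int"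
  assumes inj: "inj_on a {1..R}"
    and indep: "rationally_independent (a ` {1..R})"
    and beta: "\<forall>j\<in>{1..p}. \<beta> j \<in> a ` {1..R}"
    and rel: "integer_relation (R + 1)
                (\<lambda>i. if i = 0 then (\<Sum>j=1..p. of_int (X j) * \<beta> j) else a i) t"
  shows "\<exists>k::int. k \<noteq> 0 \<and> t 0 = - k \<and>
           (\<forall>i\<in>{1..R}. t i = k * (\<Sum>j\<in>{j\<in>{1..p}. \<beta> j = a i}. X j))"
proof -
  define \<theta> where "\<theta> i = (\<Sum>j\<in>{j\<in>{1..p}. \<beta> j = a i}. X j)" for i
  have Y_eq: "(\<Sum>j=1..p. of_int (X j) * \<beta> j) = (\<Sum>i=1..R. of_int (\<theta> i) * a i)"
    using sum_mult_group_by_value[of "{1..p}" "{1..R}" a \<beta> "\<lambda>j. real_of_int (X j)"] inj beta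
    by (auto simp: \<theta>_def)
  from integer_relation_of_independent_combination[OF inj indep rel[unfolded Y_eq]]
  have "- t 0 \<noteq> 0" "\<forall>i\<in>{1..R}. t i = - t 0 * \<theta> i" by simp_all
  then show ?thesis unfolding \<theta>_def by (intro exI[of _ "- t 0"]) simp
qed

end
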